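(* If $V$ is a value of the system $\mathbf{L}^{\Box}_{\mathrm{pol}}$ and $\Gamma ¦ \Theta \vdash V : A_{\square} ; \Delta$, then $\Gamma_{\square} ¦ \Theta \vdash V : A_{\square} ; \diamond$, where $\Gamma_{\square}$ is the sub-context of $\Gamma$ consisting of its variables of modal polarity.
   Context: $\mathbf{L}^{\Box}_{\mathrm{pol}}$ is a polarised sequent calculus (L-calculus) for classical S4 with three polarities $\epsilon \in \{+,-,\square\}$ ($\boxplus$ ranges over the positive polarities $\{+,\square\}$, $\pm$ over the non-modal polarities $\{+,-\}$). Types: $A,B ::= \mathbb{1} \mid A\otimes B \mid A\oplus B \mid \Box A \mid \neg A \mid A \,\&\, B \mid A ⅋ B$, where $⅋$ ("par") is the negative disjunction. Polarities: $\varpi(\mathbb{1})=\varpi(\Box A)=\square$; $\varpi(\neg A)=\varpi(A\&B)=\varpi(A⅋B)=-$; $\varpi(A\otimes B)=\varpi(A\oplus B)=\varpi(A)\odot\varpi(B)$ with $\epsilon\odot\epsilon'=\square$ if $\epsilon=\epsilon'=\square$ and $+$ otherwise. $A_\epsilon$ means $\varpi(A)=\epsilon$. Values: $V,W ::= x \mid (V,W) \mid \square V \mid () \mid \iota_i V \mid \mu[x^\epsilon].c \mid \mu(\alpha^{\epsilon_1}.c_1,\beta^{\epsilon_2}.c_2) \mid \mu(\alpha^{\epsilon_1},\beta^{\epsilon_2}).c \mid \mu\alpha^-.c$. Typing contexts $(\Gamma ¦ \Theta \vdash \Delta)$ have three structural (non-linear) parts: $\Gamma$ ordinary variables, $\Theta$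 modal variables ($x:A\in\Theta$ is to be read as $x:\Box A\in\Gamma$), $\Delta$ covariables (continuations); $\diamond$ is the empty list. $\Gamma ¦ \Theta \vdash V : A ; \Delta$ is the value typing judgment. A context written $\Gamma_{\square}$ is one in which every type has polarity $\square$. The introduction rule for the modality is: from $\Gamma_{\square} ¦ \Theta \vdash V : A ; \diamond$ infer $\Gamma_{\square} ¦ \Theta \vdash \square V : \Box A ; \diamond$. Typing also admits renamings (weakening/contraction/exchange). *)

theory Defs
  imports Main
begin

datatype pol = Pos | Neg | Box

datatype ty = One | Tensor ty ty | Plus ty ty | BoxT ty | Not ty | With ty ty | Par ty ty

definition odot :: "pol \<Rightarrow> pol \<Rightarrow> pol" where
  "odot e e' = (if e = Box \<and> e' = Box then Box else Pos)"

fun polarity :: "ty \<Rightarrow> pol" where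
  "polarity One = Box"
| "polarity (BoxT A) = Box"
| "polarity (Not A) = Neg"
| "polarity (With A B) = Neg"
| "polarity (Par A B) = Neg"
| "polarity (Tensor A B) = odot (polarity A) (polarity B)"
| "polarity (Plus A B) = odot (polarity A) (polarity B)"

type_synonym var = nat
type_synonym covar = nat

text \<open>Values follow the grammar of the paper exactly:
  x | (V,W) | box V | () | iota_1 V | iota_2 V | mu[x^e].c | mu(alpha^e1.c1, beta^e2.c2)
  | mu(alpha^e1, beta^e2).c | mu alpha^-.c.  Stacks (co-terms): alpha | mu~x^e.c | mu~(x^e1,y^e2).c
  | mu~().c | mu~(x^e1.c1 | y^e2.c2) | mu~[box x].c | [V] | (e,e') | pi_1 e | pi_2 e.\<close>
datatype val =
    Var var
  | Pair val val
  | BoxI val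
  | Unit
  | Inj1 val
  | Inj2 val
  | MuNot var pol cmd
  | MuWith covar pol cmd covar pol cmd
  | MuPar covar pol covar pol cmd
  | MuNeg covar cmd
and tm =
    TVal val
  | Mu covar pol cmd
and stk =
    CoVar covar
  | MuT var pol cmd
  | MuTPair var pol var pol cmd
  | MuTUnit cmd
  | MuTSum var pol cmd var pol cmd
  | MuTBox var cmd
  | SNot val
  | SPair stk stk
  | Proj1 stk
  | Proj2 stk
and cmd =
    Cut pol tm stk

text \<open>Contexts: Gamma (ordinary variables), Theta (modal variables; x:A in Theta
  is read as x : box A in Gamma), Delta (covariables); all are partial maps,
  the empty context diamond is Map.empty.\<close>
type_synonym vctx = "var \<rightharpoonup> ty"
type_synonym cctx = "covar \<rightharpoonup> ty"

definition modal_ctx :: "vctx \<Rightarrow> bool" where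
  "modal_ctx \<Gamma> \<longleftrightarrow> (\<forall>x A. \<Gamma> x = Some A \<longrightarrow> polarity A = Box)"

definition modal_part :: "vctx \<Rightarrow> vctx" where
  "modal_part \<Gamma> = (\<lambda>x. case \<Gamma> x of
      None \<Rightarrow> None
    | Some A \<Rightarrow> (if polarity A = Box then Some A else None))"

text \<open>Typing judgments:
  val_t G T V A D  :  G | T |- V : A ; D
  tm_t  G T t A D  :  G | T |- t : A ; D
  stk_t G T e A D  :  G | T | e : A |- D
  cmd_t G T c D    :  c : (G | T |- D)
  The structural rules (weakening / contraction / exchange, as map inclusion)
  are included explicitly.\<close>
inductive
  val_t :: "vctx \<Rightarrow> vctx \<Rightarrow> val \<Rightarrow> ty \<Rightarrow> cctx \<Rightarrow> bool" and
  tm_t :: "vctx \<Rightarrow> vctx \<Rightarrow> tm \<Rightarrow> ty \<Rightarrow> cctx \<Rightarrow> bool" and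
  stk_t :: "vctx \<Rightarrow> vctx \<Rightarrow> stk \<Rightarrow> ty \<Rightarrow> cctx \<Rightarrow> bool" and
  cmd_t :: "vctx \<Rightarrow> vctx \<Rightarrow> cmd \<Rightarrow> cctx \<Rightarrow> bool"
where
  v_var: "\<Gamma> x = Some A \<Longrightarrow> val_t \<Gamma> \<Theta> (Var x) A \<Delta>"
| v_mvar: "\<Theta> x = Some A \<Longrightarrow> val_t \<Gamma> \<Theta> (Var x) A \<Delta>"
| v_pair: "val_t \<Gamma> \<Theta> V A \<Delta> \<Longrightarrow> val_t \<Gamma> \<Theta> W B \<Delta> \<Longrightarrow> val_t \<Gamma> \<Theta> (Pair V W) (Tensor A B) \<Delta>"
| v_unit: "val_t \<Gamma> \<Theta> Unit One \<Delta>"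
| v_inj1: "val_t \<Gamma> \<Theta> V A \<Delta> \<Longrightarrow> val_t \<Gamma> \<Theta> (Inj1 V) (Plus A B) \<Delta>"
| v_inj2: "val_t \<Gamma> \<Theta> V B \<Delta> \<Longrightarrow> val_t \<Gamma> \<Theta> (Inj2 V) (Plus A B) \<Delta>"
| v_box: "modal_ctx \<Gamma> \<Longrightarrow> val_t \<Gamma> \<Theta> V A Map.empty \<Longrightarrow> val_t \<Gamma> \<Theta> (BoxI V) (BoxT A) Map.empty"
| v_not: "polarity A = e \<Longrightarrow> cmd_t (\<Gamma>(x \<mapsto> A)) \<Theta> c \<Delta> \<Longrightarrow> val_t \<Gamma> \<Theta> (MuNot x e c) (Not A) \<Delta>"
| v_with: "polarity A = e1 \<Longrightarrow> polarity B = e2 \<Longrightarrow> cmd_t \<Gamma> \<Theta> c1 (\<Delta>(\<alpha> \<mapsto> A)) \<Longrightarrow>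
           cmd_t \<Gamma> \<Theta> c2 (\<Delta>(\<beta> \<mapsto> B)) \<Longrightarrow> val_t \<Gamma> \<Theta> (MuWith \<alpha> e1 c1 \<beta> e2 c2) (With A B) \<Delta>"
| v_par: "polarity A = e1 \<Longrightarrow> polarity B = e2 \<Longrightarrow> \<alpha> \<noteq> \<beta> \<Longrightarrow>
           cmd_t \<Gamma> \<Theta> c (\<Delta>(\<alpha> \<mapsto> A, \<beta> \<mapsto> B)) \<Longrightarrow> val_t \<Gamma> \<Theta> (MuPar \<alpha> e1 \<beta> e2 c) (Par A B) \<Delta>"
| v_mu: "polarity A = Neg \<Longrightarrow> cmd_t \<Gamma> \<Theta> c (\<Delta>(\<alpha> \<mapsto> A)) \<Longrightarrow> val_t \<Gamma> \<Theta> (MuNeg \<alpha> c) A \<Delta>"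
| v_struct: "val_t \<Gamma> \<Theta> V A \<Delta> \<Longrightarrow> \<Gamma> \<subseteq>\<^sub>m \<Gamma>' \<Longrightarrow> \<Theta> \<subseteq>\<^sub>m \<Theta>' \<Longrightarrow> \<Delta> \<subseteq>\<^sub>m \<Delta>' \<Longrightarrow>
           val_t \<Gamma>' \<Theta>' V A \<Delta>'"
| t_val: "val_t \<Gamma> \<Theta> V A \<Delta> \<Longrightarrow> tm_t \<Gamma> \<Theta> (TVal V) A \<Delta>"
| t_mu: "polarity A = e \<Longrightarrow> cmd_t \<Gamma> \<Theta> c (\<Delta>(\<alpha> \<mapsto> A)) \<Longrightarrow> tm_t \<Gamma> \<Theta> (Mu \<alpha> e c) A \<Delta>"
| t_struct: "tm_t \<Gamma> \<Theta> t A \<Delta> \<Longrightarrow> \<Gamma> \<subseteq>\<^sub>m \<Gamma>' \<Longrightarrow> \<Theta> \<subseteq>\<^sub>m \<Theta>' \<Longrightarrow> \<Delta> \<subseteq>\<^sub>m \<Delta>' \<Longrightarrow>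
           tm_t \<Gamma>' \<Theta>' t A \<Delta>'"
| s_covar: "\<Delta> \<alpha> = Some A \<Longrightarrow> stk_t \<Gamma> \<Theta> (CoVar \<alpha>) A \<Delta>"
| s_mut: "polarity A = e \<Longrightarrow> cmd_t (\<Gamma>(x \<mapsto> A)) \<Theta> c \<Delta> \<Longrightarrow> stk_t \<Gamma> \<Theta> (MuT x e c) A \<Delta>"
| s_pair: "polarity A = e1 \<Longrightarrow> polarity B = e2 \<Longrightarrow> x \<noteq> y \<Longrightarrow>
           cmd_t (\<Gamma>(x \<mapsto> A, y \<mapsto> B)) \<Theta> c \<Delta> \<Longrightarrow> stk_t \<Gamma> \<Theta> (MuTPair x e1 y e2 c) (Tensor A B) \<Delta>"
| s_unit: "cmd_t \<Gamma> \<Theta> c \<Delta> \<Longrightarrow> stk_t \<Gamma> \<Theta> (MuTUnit c) One \<Delta>"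
| s_sum: "polarity A = e1 \<Longrightarrow> polarity B = e2 \<Longrightarrow> cmd_t (\<Gamma>(x \<mapsto> A)) \<Theta> c1 \<Delta> \<Longrightarrow>
           cmd_t (\<Gamma>(y \<mapsto> B)) \<Theta> c2 \<Delta> \<Longrightarrow> stk_t \<Gamma> \<Theta> (MuTSum x e1 c1 y e2 c2) (Plus A B) \<Delta>"
| s_box: "cmd_t \<Gamma> (\<Theta>(x \<mapsto> A)) c \<Delta> \<Longrightarrow> stk_t \<Gamma> \<Theta> (MuTBox x c) (BoxT A) \<Delta>"
| s_not: "val_t \<Gamma> \<Theta> V A \<Delta> \<Longrightarrow> stk_t \<Gamma> \<Theta> (SNot V) (Not A) \<Delta>"
| s_par: "stk_t \<Gamma> \<Theta> e1 A \<Delta> \<Longrightarrow> stk_t \<Gamma> \<Theta> e2 B \<Delta> \<Longrightarrow> stk_t \<Gamma> \<Theta> (SPair e1 e2) (Par A B) \<Delta>"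
| s_proj1: "stk_t \<Gamma> \<Theta> e A \<Delta> \<Longrightarrow> stk_t \<Gamma> \<Theta> (Proj1 e) (With A B) \<Delta>"
| s_proj2: "stk_t \<Gamma> \<Theta> e B \<Delta> \<Longrightarrow> stk_t \<Gamma> \<Theta> (Proj2 e) (With A B) \<Delta>"
| s_struct: "stk_t \<Gamma> \<Theta> e A \<Delta> \<Longrightarrow> \<Gamma> \<subseteq>\<^sub>m \<Gamma>' \<Longrightarrow> \<Theta> \<subseteq>\<^sub>m \<Theta>' \<Longrightarrow> \<Delta> \<subseteq>\<^sub>m \<Delta>' \<Longrightarrow>
           stk_t \<Gamma>' \<Theta>' e A \<Delta>'"
| c_cut: "polarity A = e \<Longrightarrow> tm_t \<Gamma> \<Theta> t A \<Delta> \<Longrightarrow> stk_t \<Gamma> \<Theta> s A \<Delta> \<Longrightarrow>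
           cmd_t \<Gamma> \<Theta> (Cut e t s) \<Delta>"
| c_struct: "cmd_t \<Gamma> \<Theta> c \<Delta> \<Longrightarrow> \<Gamma> \<subseteq>\<^sub>m \<Gamma>' \<Longrightarrow> \<Theta> \<subseteq>\<^sub>m \<Theta>' \<Longrightarrow> \<Delta> \<subseteq>\<^sub>m \<Delta>' \<Longrightarrow>
           cmd_t \<Gamma>' \<Theta>' c \<Delta>'"

end

theory Submission
  imports Defs
begin

(* The mu-abstractions are values of negative type, so a value of polarity box is built from
   variables, (), pairs, injections and boxes alone, and by the definition of odot each of its
   components again has polarity box.  A variable of polarity box survives the restriction to
   the modal part of Gamma, a box is already typed in a modal context with no covariables, and
   weakening commutes with that restriction. *)

lemma modal_part_Some_iff:
  "modal_part \<Gamma> x = Some A \<longleftrightarrow> \<Gamma> x = Some A \<and> polarity A = Box"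
  by (auto simp: modal_part_def split: option.split)

lemma modal_part_mono: "\<Gamma> \<subseteq>\<^sub>m \<Gamma>' \<Longrightarrow> modal_part \<Gamma> \<subseteq>\<^sub>m modal_part \<Gamma>'"
  unfolding map_le_def modal_part_def dom_def by (auto split: option.splits if_splits)

lemma modal_part_modal_ctx: "modal_ctx \<Gamma> \<Longrightarrow> modal_part \<Gamma> = \<Gamma>"
  by (rule ext) (auto simp: modal_ctx_def modal_part_def split: option.split)

lemma odot_eq_Box_iff: "odot e e' = Box \<longleftrightarrow> e = Box \<and> e' = Box"
  by (simp add: odot_def)

theorem mainTheorem1:
  assumes "val_t \<Gamma> \<Theta> V A \<Delta>"
    and "polarity A = Box"
  shows "val_t (modal_part \<Gamma>) \<Theta> V A Map.empty"
  using assms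
proof (induction rule: val_t_tm_t_stk_t_cmd_t.inducts(1)[where
      ?P2.0 = "\<lambda>_ _ _ _ _. True" and ?P3.0 = "\<lambda>_ _ _ _ _. True" and ?P4.0 = "\<lambda>_ _ _ _. True"])
  case (v_var \<Gamma> x A \<Theta> \<Delta>)
  then have "modal_part \<Gamma> x = Some A"
    by (simp add: modal_part_Some_iff)
  then show ?case
    by (rule val_t_tm_t_stk_t_cmd_t.v_var)
next
  case (v_pair \<Gamma> \<Theta> V A \<Delta> W B)
  then show ?case
    by (simp add: odot_eq_Box_iff val_t_tm_t_stk_t_cmd_t.v_pair)
next
  case (v_box \<Gamma> \<Theta> V A)
  then show ?case
    by (simp add: modal_part_modal_ctx val_t_tm_t_stk_t_cmd_t.v_box)
next
  case (v_struct \<Gamma> \<Theta> V A \<Delta> \<Gamma>' \<Theta>' \<Delta>')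
  then show ?case
    by (auto intro: val_t_tm_t_stk_t_cmd_t.v_struct modal_part_mono)
qed (auto intro: val_t_tm_t_stk_t_cmd_t.intros simp: odot_eq_Box_iff)

end
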